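(* Let $G=(V,E)$ be a finite graph and let $W=(w_1,\dots,w_m)$ be a selection sequence of $G$ which has the property $T_1$. Then $|W|=\alpha(G)$, where $\alpha(G)$ denotes the size of a maximum independent set of $G$.
   Context: An independent set of $G$ is a set of vertices no two of which are adjacent; $\alpha(G)$ is the maximum size of an independent set. A selection sequence of $G$ is a finite sequence $W=(w_1,\dots,w_m)$ ($m\le |V|$) of distinct vertices of $V$ such that no vertex of $W$ is adjacent to another vertex of $W$, and every vertex of $V$ is either in $W$ or adjacent to a vertex of $W$. Given a selection sequence, set $G_0=G$ and, for $1\le i\le m$, let $G_i$ be the subgraph of $G$ induced by the vertices that are neither in $\{w_1,\dots,w_i\}$ nor adjacent to any of $w_1,\dots,w_i$ (the remaining graphs). The selection sequence $W$ has the property $T_1$ if for every $1\le i\le m$ the degree of $w_i$ in $G_{i-1}$ is at most $1$. *)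

theory Defs
  imports Main
begin

definition finite_graph :: "'a set \<Rightarrow> ('a \<Rightarrow> 'a \<Rightarrow> bool) \<Rightarrow> bool" where
  "finite_graph V E \<longleftrightarrow> finite V \<and> (\<forall>u v. E u v \<longrightarrow> u \<in> V \<and> v \<in> V)
     \<and> (\<forall>u v. E u v \<longrightarrow> E v u) \<and> (\<forall>v. \<not> E v v)"

definition independent_set :: "'a set \<Rightarrow> ('a \<Rightarrow> 'a \<Rightarrow> bool) \<Rightarrow> 'a set \<Rightarrow> bool" where
  "independent_set V E S \<longleftrightarrow> S \<subseteq> V \<and> (\<forall>u\<in>S. \<forall>v\<in>S. \<not> E u v)"

definition independence_number :: "'a set \<Rightarrow> ('a \<Rightarrow> 'a \<Rightarrow> bool) \<Rightarrow> nat" where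
  "independence_number V E = Max (card ` {S. independent_set V E S})"

definition selection_sequence :: "'a set \<Rightarrow> ('a \<Rightarrow> 'a \<Rightarrow> bool) \<Rightarrow> 'a list \<Rightarrow> bool" where
  "selection_sequence V E W \<longleftrightarrow> distinct W \<and> set W \<subseteq> V
     \<and> (\<forall>u\<in>set W. \<forall>v\<in>set W. \<not> E u v)
     \<and> (\<forall>v\<in>V. v \<in> set W \<or> (\<exists>w\<in>set W. E v w))"

text \<open>Vertex set of the remaining graph G_i (i = number of selected vertices):
  vertices neither in {w_1..w_i} nor adjacent to any of them. G_i is the
  induced subgraph on this set.\<close>
definition remaining :: "'a set \<Rightarrow> ('a \<Rightarrow> 'a \<Rightarrow> bool) \<Rightarrow> 'a list \<Rightarrow> nat \<Rightarrow> 'a set" where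
  "remaining V E W i = {v \<in> V. \<forall>w\<in>set (take i W). v \<noteq> w \<and> \<not> E v w}"

definition degree_in :: "('a \<Rightarrow> 'a \<Rightarrow> bool) \<Rightarrow> 'a set \<Rightarrow> 'a \<Rightarrow> nat" where
  "degree_in E U v = card {u \<in> U. E v u}"

text \<open>Property T_1: for 1 \<le> i \<le> m, deg of w_i in G_{i-1} is at most 1
  (0-based: W ! i in remaining graph after i selections).\<close>
definition has_T1 :: "'a set \<Rightarrow> ('a \<Rightarrow> 'a \<Rightarrow> bool) \<Rightarrow> 'a list \<Rightarrow> bool" where
  "has_T1 V E W \<longleftrightarrow> (\<forall>i < length W. degree_in E (remaining V E W i) (W ! i) \<le> 1)"

end

theory Submission
  imports Defs
begin

text \<open>Every vertex of an independent set S leaves the remaining graph at some step i, and it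
  leaves it by being w_i itself or a neighbour of w_i. Two distinct vertices of S leaving at the
  same step would both be neighbours of w_i in G_i (one of them cannot be w_i, as S is
  independent), contradicting T_1. So this step map is injective from S into the m steps,
  giving |S| \<le> m; and W itself is independent of size m.\<close>

lemma exists_step_leaving:
  fixes P :: "nat \<Rightarrow> bool"
  assumes "P 0" and "\<not> P m"
  shows "\<exists>i<m. P i \<and> \<not> P (Suc i)"
  using assms(2)
proof (induction m)
  case 0
  then show ?case using assms(1) by simp
next
  case (Suc m)
  then show ?case by (cases "P m") (auto intro: less_SucI)
qed

lemma remaining_0: "remaining V E W 0 = V"
  by (simp add: remaining_def)

lemma remaining_Suc:
  assumes "i < length W"
  shows "remaining V E W (Suc i) = {v \<in> remaining V E W i. v \<noteq> W ! i \<and> \<not> E v (W ! i)}"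
  using assms by (auto simp: remaining_def take_Suc_conv_app_nth)

lemma remaining_length_empty:
  assumes "selection_sequence V E W"
  shows "remaining V E W (length W) = {}"
  using assms by (auto simp: remaining_def selection_sequence_def)

lemma finite_remaining: "finite V \<Longrightarrow> finite (remaining V E W i)"
  by (simp add: remaining_def)

lemma independent_set_selection_sequence:
  "selection_sequence V E W \<Longrightarrow> independent_set V E (set W)"
  by (auto simp: independent_set_def selection_sequence_def)

lemma leaving_step:
  assumes "selection_sequence V E W" and "v \<in> V"
  obtains i where "i < length W" and "v \<in> remaining V E W i"
    and "v = W ! i \<or> E v (W ! i)"
proof -
  obtain i where i: "i < length W" "v \<in> remaining V E W i" "v \<notin> remaining V E W (Suc i)"
    using exists_step_leaving[of "\<lambda>i. v \<in> remaining V E W i" "length W"] assms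
    by (auto simp: remaining_0 remaining_length_empty)
  have "v = W ! i \<or> E v (W ! i)"
    using i(2,3) unfolding remaining_Suc[OF i(1)] by blast
  with i(1,2) show ?thesis by (rule that)
qed

lemma independent_leaving_same_step_eq:
  assumes g: "finite_graph V E" and t: "has_T1 V E W" and S: "independent_set V E S"
    and i: "i < length W"
    and x: "x \<in> S" "x \<in> remaining V E W i" "x = W ! i \<or> E x (W ! i)"
    and y: "y \<in> S" "y \<in> remaining V E W i" "y = W ! i \<or> E y (W ! i)"
  shows "x = y"
proof (rule ccontr)
  assume "x \<noteq> y"
  let ?N = "{u \<in> remaining V E W i. E (W ! i) u}"
  have sym: "\<And>u v. E u v \<Longrightarrow> E v u" and "finite V"
    using g by (auto simp: finite_graph_def)
  have "\<not> E x y" "\<not> E y x"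
    using S x(1) y(1) by (auto simp: independent_set_def)
  then have "E x (W ! i)" "E y (W ! i)"
    using x(3) y(3) \<open>x \<noteq> y\<close> by auto
  then have "{x, y} \<subseteq> ?N"
    using sym x(2) y(2) by auto
  then have "card {x, y} \<le> card ?N"
    using finite_remaining[OF \<open>finite V\<close>] by (intro card_mono) auto
  moreover have "card ?N \<le> 1"
    using t i by (simp add: has_T1_def degree_in_def)
  ultimately show False
    using \<open>x \<noteq> y\<close> by simp
qed

lemma card_independent_le_length:
  assumes g: "finite_graph V E" and s: "selection_sequence V E W" and t: "has_T1 V E W"
    and S: "independent_set V E S"
  shows "card S \<le> length W"
proof -
  have "\<exists>i. i < length W \<and> x \<in> remaining V E W i \<and> (x = W ! i \<or> E x (W ! i))"
    if "x \<in> S" for x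
  proof -
    have "x \<in> V" using S that by (auto simp: independent_set_def)
    then show ?thesis by (rule leaving_step[OF s]) blast
  qed
  then obtain f where f: "\<And>x. x \<in> S \<Longrightarrow> f x < length W \<and> x \<in> remaining V E W (f x)
      \<and> (x = W ! f x \<or> E x (W ! f x))"
    by metis
  have "inj_on f S"
  proof (rule inj_onI)
    fix x y assume "x \<in> S" "y \<in> S" "f x = f y"
    then show "x = y"
      using f[of x] f[of y] independent_leaving_same_step_eq[OF g t S, of "f x" x y] by simp
  qed
  moreover have "f ` S \<subseteq> {..<length W}"
    using f by auto
  ultimately show ?thesis
    using card_inj_on_le[of f S "{..<length W}"] by simp
qed

lemma independence_number_eqI:
  assumes "finite V" and "independent_set V E T"
    and "\<And>S. independent_set V E S \<Longrightarrow> card S \<le> card T"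
  shows "independence_number V E = card T"
proof -
  have "finite {S. independent_set V E S}"
    by (rule finite_subset[of _ "Pow V"]) (auto simp: independent_set_def assms(1))
  then show ?thesis
    unfolding independence_number_def using assms(2,3) by (intro Max_eqI) auto
qed

theorem lemma1:
  fixes V :: "'a set" and E :: "'a \<Rightarrow> 'a \<Rightarrow> bool" and W :: "'a list"
  assumes "finite_graph V E"
    and "selection_sequence V E W"
    and "has_T1 V E W"
  shows "length W = independence_number V E"
proof -
  have "card (set W) = length W"
    using assms(2) by (simp add: selection_sequence_def distinct_card)
  moreover have "independence_number V E = card (set W)"
    using assms(1) independent_set_selection_sequence[OF assms(2)]
      card_independent_le_length[OF assms] \<open>card (set W) = length W\<close>
    by (intro independence_number_eqI) (auto simp: finite_graph_def)
  ultimately show ?thesis by simp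
qed

end
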